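(* Let $n\ge3$ and let $P$ be the $n\times n$ matrix whose first row has all entries equal to $1/n$ and whose row $i$, for $2\le i\le n$, has entry $1$ in column $i-1$ and zeros elsewhere. Then $P$ is SIA and its SIA index equals $n-1$; in particular the set $\mathcal V_{n-1}$ is nonempty.
   Context: Let $\mathcal N=\{1,\ldots,n\}$. A matrix is stochastic if it is entrywise nonnegative with row sums $1$. For stochastic $P$ and $\mathcal A\subseteq\mathcal N$, $F_P(\mathcal A)=\{j:\ p_{ij}>0\text{ for some } i\in\mathcal A\}$, $F_P^1=F_P$, $F_P^k(\mathcal A)=F_P(F_P^{k-1}(\mathcal A))$. $P$ is SIA if $\lim_{m\to\infty}P^m=\mathbf 1c^T$ for some nonnegative $c$ with entries summing to $1$. For an SIA matrix $P$ and each unordered pair of disjoint nonempty sets $\mathcal A,\tilde{\mathcal A}\subseteq\mathcal N$, let $s(\mathcal A,\tilde{\mathcal A})$ be the smallest integer $k\ge1$ such that either (i) $F_P^k(\mathcal A)\cap F_P^k(\tilde{\mathcal A})\ne\emptyset$, or (ii) $F_P^k(\mathcal A)\cap F_P^k(\tilde{\mathcal A})=\emptyset$ and $|F_P^k(\mathcal A)\cup F_P^k(\tilde{\mathcal A})|>|\mathcal A\cup\tilde{\mathcal A}|$. The SIA index of $P$ is the maximum of $s(\mathcal A,\tilde{\mathcal A})$ over all such pairs. $\mathcal V_k$ denotes the set of $n\times n$ SIA matrices with SIA index exactly $k$. *)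

theory Defs
  imports Complex_Main
begin

text \<open>n x n real matrices are represented as functions nat => nat => real,
  with rows and columns indexed by {1..n}; entries outside this range are ignored.\<close>

definition stochastic :: "nat \<Rightarrow> (nat \<Rightarrow> nat \<Rightarrow> real) \<Rightarrow> bool" where
  "stochastic n P \<longleftrightarrow>
     (\<forall>i\<in>{1..n}. \<forall>j\<in>{1..n}. P i j \<ge> 0) \<and> (\<forall>i\<in>{1..n}. (\<Sum>j=1..n. P i j) = 1)"

definition matmul :: "nat \<Rightarrow> (nat \<Rightarrow> nat \<Rightarrow> real) \<Rightarrow> (nat \<Rightarrow> nat \<Rightarrow> real) \<Rightarrow> (nat \<Rightarrow> nat \<Rightarrow> real)" where
  "matmul n A B = (\<lambda>i j. \<Sum>k=1..n. A i k * B k j)"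

fun matpow :: "nat \<Rightarrow> (nat \<Rightarrow> nat \<Rightarrow> real) \<Rightarrow> nat \<Rightarrow> (nat \<Rightarrow> nat \<Rightarrow> real)" where
  "matpow n P 0 = (\<lambda>i j. if i = j then 1 else 0)"
| "matpow n P (Suc m) = matmul n (matpow n P m) P"

definition SIA :: "nat \<Rightarrow> (nat \<Rightarrow> nat \<Rightarrow> real) \<Rightarrow> bool" where
  "SIA n P \<longleftrightarrow> stochastic n P \<and>
     (\<exists>c::nat \<Rightarrow> real. (\<forall>j\<in>{1..n}. c j \<ge> 0) \<and> (\<Sum>j=1..n. c j) = 1 \<and>
        (\<forall>i\<in>{1..n}. \<forall>j\<in>{1..n}. (\<lambda>m. matpow n P m i j) \<longlonglongrightarrow> c j))"

definition F :: "nat \<Rightarrow> (nat \<Rightarrow> nat \<Rightarrow> real) \<Rightarrow> nat set \<Rightarrow> nat set" where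
  "F n P A = {j\<in>{1..n}. \<exists>i\<in>A. P i j > 0}"

definition Fk :: "nat \<Rightarrow> (nat \<Rightarrow> nat \<Rightarrow> real) \<Rightarrow> nat \<Rightarrow> nat set \<Rightarrow> nat set" where
  "Fk n P k A = (F n P ^^ k) A"

definition s_index :: "nat \<Rightarrow> (nat \<Rightarrow> nat \<Rightarrow> real) \<Rightarrow> nat set \<Rightarrow> nat set \<Rightarrow> nat" where
  "s_index n P A B = (LEAST k. k \<ge> 1 \<and>
      (Fk n P k A \<inter> Fk n P k B \<noteq> {} \<or>
       (Fk n P k A \<inter> Fk n P k B = {} \<and> card (Fk n P k A \<union> Fk n P k B) > card (A \<union> B))))"

definition admissible_pair :: "nat \<Rightarrow> nat set \<Rightarrow> nat set \<Rightarrow> bool" where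
  "admissible_pair n A B \<longleftrightarrow> A \<subseteq> {1..n} \<and> B \<subseteq> {1..n} \<and> A \<noteq> {} \<and> B \<noteq> {} \<and> A \<inter> B = {}"

definition SIA_index :: "nat \<Rightarrow> (nat \<Rightarrow> nat \<Rightarrow> real) \<Rightarrow> nat" where
  "SIA_index n P = Max {s_index n P A B | A B. admissible_pair n A B}"

definition V :: "nat \<Rightarrow> nat \<Rightarrow> (nat \<Rightarrow> nat \<Rightarrow> real) set" where
  "V n k = {P. SIA n P \<and> SIA_index n P = k}"

end

theory Submission
  imports Defs
begin

text \<open>
  Multiplying by \<open>P\<close> replaces the first entry of a vector by the average of all entries
  and shifts every other entry down by one position. Along such an iteration the range of the
  entries never grows, and after \<open>n\<close> steps it shrinks by the factor \<open>1 - n\<^sup>-\<^sup>n\<close>, since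
  every entry is then a delayed copy of a first entry that kept weight \<open>\<ge> n\<^sup>-\<^sup>n\<close> on an earlier
  value. Hence each column of \<open>P\<^sup>m\<close> converges to a constant, and \<open>P\<close> is SIA.

  For the index, \<open>F\<^sub>P\<close> maps a set containing \<open>1\<close> to all of \<open>{1..n}\<close> and any other set to its
  shift down by one. For an admissible pair \<open>A, B\<close> the iterates therefore remain disjoint
  shifts of the same total size until step \<open>min (A \<union> B)\<close>, where one of them becomes
  everything: \<open>s(A, B) = min (A \<union> B)\<close>, whose maximum \<open>n - 1\<close> is attained at \<open>{n - 1}, {n}\<close>.
\<close>

locale shift_average =
  fixes n :: nat and f :: "nat \<Rightarrow> nat \<Rightarrow> real"
  assumes n_pos: "1 \<le> n"
    and first_avg: "\<And>m. f (Suc m) 1 = (\<Sum>k=1..n. f m k) / real n"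
    and shift: "\<And>m i. 2 \<le> i \<Longrightarrow> i \<le> n \<Longrightarrow> f (Suc m) i = f m (i - 1)"
begin

lemma uminus: "shift_average n (\<lambda>m i. - f m i)"
proof
  show "- f (Suc m) 1 = (\<Sum>k=1..n. - f m k) / real n" for m
    using first_avg[of m] by (simp add: sum_negf)
qed (use n_pos shift in auto)

lemma upper_bound_persists:
  assumes "\<forall>i\<in>{1..n}. f m i \<le> U" "i \<in> {1..n}"
  shows "f (m + t) i \<le> U"
  using assms(2)
proof (induction t arbitrary: i)
  case 0
  then show ?case using assms(1) by simp
next
  case (Suc t)
  show ?case
  proof (cases "i = 1")
    case True
    have "(\<Sum>k=1..n. f (m + t) k) \<le> of_nat (card {1..n}) * U"
      by (rule sum_bounded_above) (use Suc.IH in auto)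
    then show ?thesis
      using True first_avg[of "m + t"] n_pos by (simp add: divide_le_eq mult.commute)
  next
    case False
    then have "i - 1 \<in> {1..n}" and "f (m + Suc t) i = f (m + t) (i - 1)"
      using Suc.prems shift[of i "m + t"] by auto
    then show ?thesis using Suc.IH by simp
  qed
qed

lemma lower_bound_persists:
  assumes "\<forall>i\<in>{1..n}. L \<le> f m i" "i \<in> {1..n}"
  shows "L \<le> f (m + t) i"
proof -
  interpret neg: shift_average n "\<lambda>m i. - f m i" by (rule uminus)
  show ?thesis using neg.upper_bound_persists[of m "- L"] assms by simp
qed

lemma first_entry_propagates: "Suc d \<le> n \<Longrightarrow> f (m + d) (Suc d) = f m 1"
  by (induction d) (simp_all add: shift)

lemma first_entry_upper_bound:
  assumes "\<forall>i\<in>{1..n}. f m i \<le> U"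
  shows "f (m + t) 1 \<le> U - (U - f m 1) / real n ^ t"
proof (induction t)
  case 0
  then show ?case by simp
next
  case (Suc t)
  have "(\<Sum>k=2..n. f (m + t) k) \<le> of_nat (card {2..n}) * U"
    by (rule sum_bounded_above) (use upper_bound_persists[OF assms] in auto)
  moreover have "(\<Sum>k=1..n. f (m + t) k) = f (m + t) 1 + (\<Sum>k=2..n. f (m + t) k)"
    using n_pos by (simp add: sum.atLeast_Suc_atMost numeral_2_eq_2)
  ultimately have "(\<Sum>k=1..n. f (m + t) k) \<le> U - (U - f m 1) / real n ^ t + (real n - 1) * U"
    using Suc.IH n_pos by (simp add: of_nat_diff)
  then have "f (m + Suc t) 1 \<le> (U - (U - f m 1) / real n ^ t + (real n - 1) * U) / real n"
    using first_avg[of "m + t"] n_pos by (simp add: divide_right_mono)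
  also have "\<dots> = U - (U - f m 1) / real n ^ Suc t"
    using n_pos by (simp add: field_simps)
  finally show ?case .
qed

lemma upper_bound_contracts:
  assumes bound: "\<forall>i\<in>{1..n}. f m i \<le> U" and i: "i \<in> {1..n}"
  shows "f (m + n) i \<le> U - (U - f m 1) / real n ^ n"
proof -
  obtain d where d: "i = Suc d" "d < n" using i by (cases i) auto
  have "f (m + n) i = f (m + (n - d)) 1"
    using first_entry_propagates[of d "m + (n - d)"] d by simp
  also have "\<dots> \<le> U - (U - f m 1) / real n ^ (n - d)"
    by (rule first_entry_upper_bound[OF bound])
  also have "\<dots> \<le> U - (U - f m 1) / real n ^ n"
  proof -
    have "f m 1 \<le> U" using bound n_pos by simp
    moreover have "real n ^ (n - d) \<le> real n ^ n"
      using n_pos by (intro power_increasing) auto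
    ultimately show ?thesis
      using n_pos by (simp add: divide_left_mono)
  qed
  finally show ?thesis .
qed

lemma lower_bound_contracts:
  assumes "\<forall>i\<in>{1..n}. L \<le> f m i" "i \<in> {1..n}"
  shows "L + (f m 1 - L) / real n ^ n \<le> f (m + n) i"
proof -
  interpret neg: shift_average n "\<lambda>m i. - f m i" by (rule uminus)
  show ?thesis using neg.upper_bound_contracts[of m "- L"] assms by (simp add: field_simps)
qed

lemma spread_shrinks:
  assumes init: "\<forall>i\<in>{1..n}. L \<le> f 0 i \<and> f 0 i \<le> U"
  shows "\<exists>L' U'. U' - L' = (U - L) * (1 - 1 / real n ^ n) ^ q \<and>
    (\<forall>t\<ge>q * n. \<forall>i\<in>{1..n}. L' \<le> f t i \<and> f t i \<le> U')"
proof (induction q)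
  case 0
  show ?case
    using init lower_bound_persists[of L 0] upper_bound_persists[of 0 U]
    by (intro exI[of _ L] exI[of _ U]) auto
next
  case (Suc q)
  then obtain L' U' where width: "U' - L' = (U - L) * (1 - 1 / real n ^ n) ^ q"
    and bound: "\<forall>t\<ge>q * n. \<forall>i\<in>{1..n}. L' \<le> f t i \<and> f t i \<le> U'"
    by blast
  define m where "m = q * n"
  define L'' where "L'' = L' + (f m 1 - L') / real n ^ n"
  define U'' where "U'' = U' - (U' - f m 1) / real n ^ n"
  have "\<forall>i\<in>{1..n}. L' \<le> f m i" "\<forall>i\<in>{1..n}. f m i \<le> U'"
    using bound m_def by auto
  then have "\<forall>i\<in>{1..n}. L'' \<le> f (m + n) i" "\<forall>i\<in>{1..n}. f (m + n) i \<le> U''"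
    using lower_bound_contracts upper_bound_contracts L''_def U''_def by auto
  moreover have "t = (m + n) + (t - (m + n))" if "Suc q * n \<le> t" for t
    using that m_def by simp
  ultimately have "L'' \<le> f t i \<and> f t i \<le> U''" if "Suc q * n \<le> t" "i \<in> {1..n}" for t i
    using lower_bound_persists[where m = "m + n" and t = "t - (m + n)"]
      upper_bound_persists[where m = "m + n" and t = "t - (m + n)"] that by metis
  moreover have "U'' - L'' = (U' - L') * (1 - 1 / real n ^ n)"
    unfolding U''_def L''_def
    by (simp add: algebra_simps add_divide_distrib[symmetric] diff_divide_distrib[symmetric])
  then have "U'' - L'' = (U - L) * (1 - 1 / real n ^ n) ^ Suc q"
    using width by simp
  ultimately show ?case by blast
qed

lemma entries_eventually_close:
  assumes "0 < e"
  shows "\<exists>N. \<forall>t\<ge>N. \<forall>t'\<ge>N. \<forall>i\<in>{1..n}. \<forall>i'\<in>{1..n}. \<bar>f t i - f t' i'\<bar> < e"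
proof -
  define L where "L = Min (f 0 ` {1..n})"
  define U where "U = Max (f 0 ` {1..n})"
  have init: "\<forall>i\<in>{1..n}. L \<le> f 0 i \<and> f 0 i \<le> U"
    unfolding L_def U_def by auto
  have "(\<lambda>q. (U - L) * (1 - 1 / real n ^ n) ^ q) \<longlonglongrightarrow> 0"
    using n_pos by (intro tendsto_mult_right_zero LIMSEQ_power_zero) (simp add: field_simps)
  from order_tendstoD(2)[OF this assms]
  obtain q where q: "(U - L) * (1 - 1 / real n ^ n) ^ q < e"
    by (auto simp: eventually_sequentially)
  obtain L' U' where width: "U' - L' = (U - L) * (1 - 1 / real n ^ n) ^ q"
    and bound: "\<forall>t\<ge>q * n. \<forall>i\<in>{1..n}. L' \<le> f t i \<and> f t i \<le> U'"
    using spread_shrinks[OF init] by blast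
  have "\<bar>f t i - f t' i'\<bar> < e"
    if "q * n \<le> t" "q * n \<le> t'" "i \<in> {1..n}" "i' \<in> {1..n}" for t t' i i'
    using bound[rule_format, OF that(1,3)] bound[rule_format, OF that(2,4)] width q by linarith
  then show ?thesis by blast
qed

lemma converges_to_common_limit: "\<exists>c. \<forall>i\<in>{1..n}. (\<lambda>t. f t i) \<longlonglongrightarrow> c"
proof -
  have one: "1 \<in> {1..n}" using n_pos by simp
  have "Cauchy (\<lambda>t. f t 1)"
  proof (rule CauchyI)
    fix e :: real assume "0 < e"
    with entries_eventually_close one
    show "\<exists>N. \<forall>t\<ge>N. \<forall>t'\<ge>N. norm (f t 1 - f t' 1) < e" by fastforce
  qed
  then obtain c where c: "(\<lambda>t. f t 1) \<longlonglongrightarrow> c"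
    using Cauchy_convergent convergent_def by blast
  have "(\<lambda>t. f t i) \<longlonglongrightarrow> c" if i: "i \<in> {1..n}" for i
  proof -
    have "(\<lambda>t. f t i - f t 1) \<longlonglongrightarrow> 0"
    proof (rule LIMSEQ_I)
      fix e :: real assume "0 < e"
      with entries_eventually_close one i
      show "\<exists>N. \<forall>t\<ge>N. norm (f t i - f t 1 - 0) < e" by fastforce
    qed
    from tendsto_add[OF this c] show ?thesis by simp
  qed
  then show ?thesis by blast
qed

end

lemma matpow_Suc_left:
  assumes "i \<in> {1..n}" "j \<in> {1..n}"
  shows "matpow n P (Suc m) i j = (\<Sum>k=1..n. P i k * matpow n P m k j)"
  using assms
proof (induction m arbitrary: i j)
  case 0
  then show ?case
    by (simp add: matmul_def if_distrib[of "\<lambda>x. x * _"] if_distrib[of "\<lambda>x. _ * x"]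
        sum.delta sum.delta' cong: if_cong)
next
  case (Suc m)
  have "matpow n P (Suc (Suc m)) i j = (\<Sum>l=1..n. (\<Sum>k=1..n. P i k * matpow n P m k l) * P l j)"
    using Suc by (simp add: matmul_def)
  also have "\<dots> = (\<Sum>k=1..n. P i k * (\<Sum>l=1..n. matpow n P m k l * P l j))"
    by (simp add: sum_distrib_left sum_distrib_right mult.assoc) (rule sum.swap)
  finally show ?case by (simp add: matmul_def)
qed

lemma matpow_nonneg:
  assumes "stochastic n P" "i \<in> {1..n}" "j \<in> {1..n}"
  shows "0 \<le> matpow n P m i j"
  using assms(3)
proof (induction m arbitrary: j)
  case (Suc m)
  then show ?case
    using assms(1) unfolding stochastic_def by (auto simp: matmul_def intro!: sum_nonneg)
qed (simp add: sum.delta)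

lemma matpow_row_sum:
  assumes "stochastic n P" "i \<in> {1..n}"
  shows "(\<Sum>j=1..n. matpow n P m i j) = 1"
  using assms(2)
proof (induction m arbitrary: i)
  case 0
  then show ?case by (simp add: sum.delta)
next
  case (Suc m)
  have "(\<Sum>j=1..n. matpow n P (Suc m) i j) = (\<Sum>j=1..n. \<Sum>k=1..n. P i k * matpow n P m k j)"
    using Suc.prems by (intro sum.cong refl matpow_Suc_left) auto
  also have "\<dots> = (\<Sum>k=1..n. P i k * (\<Sum>j=1..n. matpow n P m k j))"
    by (simp add: sum_distrib_left) (rule sum.swap)
  also have "\<dots> = (\<Sum>k=1..n. P i k)" using Suc.IH by simp
  also have "\<dots> = 1" using Suc.prems assms(1) unfolding stochastic_def by simp
  finally show ?case .
qed

lemma SIA_if_columns_converge: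
  assumes st: "stochastic n P" and n: "1 \<le> n"
    and conv: "\<forall>j\<in>{1..n}. \<exists>c. \<forall>i\<in>{1..n}. (\<lambda>m. matpow n P m i j) \<longlonglongrightarrow> c"
  shows "SIA n P"
proof -
  obtain c where c: "\<forall>j\<in>{1..n}. \<forall>i\<in>{1..n}. (\<lambda>m. matpow n P m i j) \<longlonglongrightarrow> c j"
    using conv by metis
  have one: "1 \<in> {1..n}" using n by simp
  have "\<forall>j\<in>{1..n}. 0 \<le> c j"
    using c one matpow_nonneg[OF st] by (blast intro: LIMSEQ_le_const)
  moreover have "(\<lambda>m. \<Sum>j=1..n. matpow n P m 1 j) \<longlonglongrightarrow> (\<Sum>j=1..n. c j)"
    using c one by (intro tendsto_sum) blast
  then have "(\<Sum>j=1..n. c j) = 1"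
    using matpow_row_sum[OF st one] by (simp add: LIMSEQ_const_iff)
  ultimately show ?thesis unfolding SIA_def using st c by blast
qed

definition avg_shift_matrix :: "nat \<Rightarrow> nat \<Rightarrow> nat \<Rightarrow> real" where
  "avg_shift_matrix n = (\<lambda>i j. if i = 1 then 1 / real n else if j = i - 1 then 1 else 0)"

lemma avg_shift_matrix_stochastic:
  assumes n: "1 \<le> n"
  shows "stochastic n (avg_shift_matrix n)"
proof -
  have "(\<Sum>j=1..n. avg_shift_matrix n i j) = 1" if i: "i \<in> {1..n}" for i
  proof (cases "i = 1")
    case True
    then show ?thesis using n by (simp add: avg_shift_matrix_def)
  next
    case False
    then have "i - 1 \<in> {1..n}" using i by auto
    then show ?thesis using False by (simp add: avg_shift_matrix_def sum.delta)
  qed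
  then show ?thesis unfolding stochastic_def by (auto simp: avg_shift_matrix_def)
qed

lemma shift_average_avg_shift_matpow:
  assumes n: "1 \<le> n" and j: "j \<in> {1..n}"
  shows "shift_average n (\<lambda>m i. matpow n (avg_shift_matrix n) m i j)"
proof
  fix m
  have one: "1 \<in> {1..n}" using n by simp
  show "matpow n (avg_shift_matrix n) (Suc m) 1 j
      = (\<Sum>k=1..n. matpow n (avg_shift_matrix n) m k j) / real n"
    unfolding matpow_Suc_left[OF one j] by (simp add: avg_shift_matrix_def sum_divide_distrib)
next
  fix m i assume i: "2 \<le> i" "i \<le> n"
  then have "(\<Sum>k=1..n. avg_shift_matrix n i k * matpow n (avg_shift_matrix n) m k j)
      = (\<Sum>k=1..n. if k = i - 1 then matpow n (avg_shift_matrix n) m k j else 0)"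
    by (intro sum.cong) (auto simp: avg_shift_matrix_def)
  moreover have "i - 1 \<in> {1..n}" and i_range: "i \<in> {1..n}" using i by auto
  ultimately show "matpow n (avg_shift_matrix n) (Suc m) i j
      = matpow n (avg_shift_matrix n) m (i - 1) j"
    unfolding matpow_Suc_left[OF i_range j] by (simp add: sum.delta)
qed (rule n)

lemma avg_shift_matrix_SIA: "1 \<le> n \<Longrightarrow> SIA n (avg_shift_matrix n)"
  by (intro SIA_if_columns_converge avg_shift_matrix_stochastic ballI
      shift_average.converges_to_common_limit shift_average_avg_shift_matpow)

lemma F_avg_shift_matrix:
  assumes "1 \<le> n"
  shows "F n (avg_shift_matrix n) A = (if 1 \<in> A then {1..n} else {j\<in>{1..n}. Suc j \<in> A})"
proof (cases "1 \<in> A")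
  case True
  then show ?thesis using assms unfolding F_def avg_shift_matrix_def by auto
next
  case False
  have "j \<in> F n (avg_shift_matrix n) A \<longleftrightarrow> j \<in> {1..n} \<and> Suc j \<in> A" for j
  proof
    assume "j \<in> F n (avg_shift_matrix n) A"
    then obtain i where "j \<in> {1..n}" "i \<in> A" "avg_shift_matrix n i j > 0"
      unfolding F_def by auto
    moreover have "i \<noteq> 1" using False \<open>i \<in> A\<close> by auto
    ultimately show "j \<in> {1..n} \<and> Suc j \<in> A"
      unfolding avg_shift_matrix_def by (auto split: if_splits)
  next
    assume "j \<in> {1..n} \<and> Suc j \<in> A"
    then show "j \<in> F n (avg_shift_matrix n) A"
      unfolding F_def avg_shift_matrix_def by (auto intro!: bexI[of _ "Suc j"])
  qed
  then show ?thesis using False by auto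
qed

lemma Fk_avg_shift_matrix:
  assumes n: "1 \<le> n" and A: "A \<subseteq> {1..n}" and above: "\<forall>a\<in>A. k < a"
  shows "Fk n (avg_shift_matrix n) k A = {j\<in>{1..n}. j + k \<in> A}"
  using above
proof (induction k)
  case 0
  then show ?case using A by (auto simp: Fk_def)
next
  case (Suc k)
  then have IH: "Fk n (avg_shift_matrix n) k A = {j\<in>{1..n}. j + k \<in> A}" by fastforce
  then have "1 \<notin> Fk n (avg_shift_matrix n) k A" using Suc.prems by fastforce
  then show ?case using IH A by (auto simp: Fk_def F_avg_shift_matrix[OF n])
qed

lemma Fk_avg_shift_matrix_meet:
  assumes n: "1 \<le> n" and adm: "admissible_pair n A B"
    and m: "m \<in> A" "\<forall>x\<in>A \<union> B. m \<le> x"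
  shows "Fk n (avg_shift_matrix n) m A \<inter> Fk n (avg_shift_matrix n) m B \<noteq> {}"
proof -
  have A: "A \<subseteq> {1..n}" and B: "B \<subseteq> {1..n}"
    using adm unfolding admissible_pair_def by auto
  obtain k where k: "m = Suc k" using m A by (cases m) auto
  have "\<forall>a\<in>A. k < a" using m(2) k by (simp add: Suc_le_eq)
  then have "1 \<in> Fk n (avg_shift_matrix n) k A"
    using Fk_avg_shift_matrix[OF n A, of k] m k n by auto
  then have full: "Fk n (avg_shift_matrix n) m A = {1..n}"
    using k by (simp add: Fk_def F_avg_shift_matrix[OF n])
  have "\<forall>b\<in>B. m < b"
    using m adm unfolding admissible_pair_def by (metis UnCI disjoint_iff le_neq_implies_less)
  moreover obtain b where "b \<in> B" using adm unfolding admissible_pair_def by auto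
  moreover have "b \<le> n" using B \<open>b \<in> B\<close> by auto
  ultimately have "b - m \<in> Fk n (avg_shift_matrix n) m A \<inter> Fk n (avg_shift_matrix n) m B"
    unfolding full using Fk_avg_shift_matrix[OF n B, of m] by auto
  then show ?thesis by blast
qed

lemma Fk_avg_shift_matrix_separate:
  assumes n: "1 \<le> n" and adm: "admissible_pair n A B" and k: "\<forall>x\<in>A \<union> B. k < x"
  shows "Fk n (avg_shift_matrix n) k A \<inter> Fk n (avg_shift_matrix n) k B = {}"
    and "card (Fk n (avg_shift_matrix n) k A \<union> Fk n (avg_shift_matrix n) k B) = card (A \<union> B)"
proof -
  have A: "A \<subseteq> {1..n}" and B: "B \<subseteq> {1..n}" and disj: "A \<inter> B = {}"
    using adm unfolding admissible_pair_def by auto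
  have FA: "Fk n (avg_shift_matrix n) k A = {j\<in>{1..n}. j + k \<in> A}"
    and FB: "Fk n (avg_shift_matrix n) k B = {j\<in>{1..n}. j + k \<in> B}"
    using Fk_avg_shift_matrix[OF n] A B k by auto
  show "Fk n (avg_shift_matrix n) k A \<inter> Fk n (avg_shift_matrix n) k B = {}"
    unfolding FA FB using disj by auto
  have "bij_betw (\<lambda>j. j + k) {j\<in>{1..n}. j + k \<in> A \<union> B} (A \<union> B)"
  proof (rule bij_betw_imageI)
    show "(\<lambda>j. j + k) ` {j\<in>{1..n}. j + k \<in> A \<union> B} = A \<union> B"
    proof
      show "A \<union> B \<subseteq> (\<lambda>j. j + k) ` {j\<in>{1..n}. j + k \<in> A \<union> B}"
      proof
        fix x assume "x \<in> A \<union> B"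
        moreover have "k < x" "x \<le> n" using calculation k A B by auto
        ultimately show "x \<in> (\<lambda>j. j + k) ` {j\<in>{1..n}. j + k \<in> A \<union> B}"
          by (intro image_eqI[of _ _ "x - k"]) auto
      qed
    qed auto
  qed (simp add: inj_on_def)
  then show "card (Fk n (avg_shift_matrix n) k A \<union> Fk n (avg_shift_matrix n) k B) = card (A \<union> B)"
    unfolding FA FB by (simp add: bij_betw_same_card Collect_disj_eq[symmetric] conj_disj_distribL)
qed

lemma s_index_avg_shift_matrix:
  assumes n: "1 \<le> n" and adm: "admissible_pair n A B"
  shows "s_index n (avg_shift_matrix n) A B = Min (A \<union> B)"
proof -
  have fin: "finite (A \<union> B)" "A \<union> B \<noteq> {}"
    using adm unfolding admissible_pair_def by (auto intro: finite_subset)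
  define m where "m = Min (A \<union> B)"
  have m_min: "\<forall>x\<in>A \<union> B. m \<le> x" and m_pos: "1 \<le> m"
    using fin adm unfolding m_def admissible_pair_def by auto
  have "Fk n (avg_shift_matrix n) m A \<inter> Fk n (avg_shift_matrix n) m B \<noteq> {}"
  proof (cases "m \<in> A")
    case True
    then show ?thesis using Fk_avg_shift_matrix_meet[OF n adm _ m_min] by blast
  next
    case False
    then have "m \<in> B" using Min_in[OF fin] m_def by blast
    moreover have "admissible_pair n B A" using adm unfolding admissible_pair_def by auto
    ultimately show ?thesis
      using Fk_avg_shift_matrix_meet[of n B A m] n m_min by (auto simp: Un_commute)
  qed
  moreover have "m \<le> k"
    if "Fk n (avg_shift_matrix n) k A \<inter> Fk n (avg_shift_matrix n) k B \<noteq> {} \<or>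
        card (A \<union> B) < card (Fk n (avg_shift_matrix n) k A \<union> Fk n (avg_shift_matrix n) k B)" for k
  proof (rule ccontr)
    assume "\<not> m \<le> k"
    then have "\<forall>x\<in>A \<union> B. k < x" using m_min by (meson less_le_trans not_le)
    then show False using that Fk_avg_shift_matrix_separate[OF n adm] by simp
  qed
  ultimately show ?thesis
    unfolding s_index_def m_def[symmetric] using m_pos by (intro Least_equality) auto
qed

lemma SIA_index_avg_shift_matrix:
  assumes n: "2 \<le> n"
  shows "SIA_index n (avg_shift_matrix n) = n - 1"
proof -
  have "{s_index n (avg_shift_matrix n) A B | A B. admissible_pair n A B}
      = {Min (A \<union> B) | A B. admissible_pair n A B}"
    using n s_index_avg_shift_matrix[of n] by (metis (lifting) one_le_numeral order_trans)
  moreover have bounded: "{Min (A \<union> B) | A B. admissible_pair n A B} \<subseteq> {..n - 1}"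
  proof clarify
    fix A B assume adm: "admissible_pair n A B"
    then obtain a b where "a \<in> A" "b \<in> B"
      unfolding admissible_pair_def by blast
    moreover have "a \<noteq> b" "a \<le> n" "b \<le> n"
      using adm calculation unfolding admissible_pair_def by auto
    moreover have "finite (A \<union> B)"
      using adm unfolding admissible_pair_def by (auto intro: finite_subset)
    ultimately have "Min (A \<union> B) \<le> a" "Min (A \<union> B) \<le> b" by auto
    with \<open>a \<noteq> b\<close> \<open>a \<le> n\<close> \<open>b \<le> n\<close> show "Min (A \<union> B) \<le> n - 1" by linarith
  qed
  moreover have "Max {Min (A \<union> B) | A B. admissible_pair n A B} = n - 1"
  proof (rule Max_eqI)
    show "finite {Min (A \<union> B) | A B. admissible_pair n A B}"
      using bounded by (rule finite_subset) simp
  next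
    fix y assume "y \<in> {Min (A \<union> B) | A B. admissible_pair n A B}"
    then show "y \<le> n - 1" using bounded by auto
  next
    have "admissible_pair n {n} {n - 1}" using n unfolding admissible_pair_def by auto
    moreover have "n - 1 = Min ({n} \<union> {n - 1})" by simp
    ultimately show "n - 1 \<in> {Min (A \<union> B) | A B. admissible_pair n A B}" by blast
  qed
  ultimately show ?thesis unfolding SIA_index_def by simp
qed

theorem mainTheorem2:
  fixes n :: nat and P :: "nat \<Rightarrow> nat \<Rightarrow> real"
  assumes "n \<ge> 3"
    and "P = (\<lambda>i j. if i = 1 then 1 / real n else if j = i - 1 then 1 else 0)"
  shows "SIA n P \<and> SIA_index n P = n - 1 \<and> V n (n - 1) \<noteq> {}"
proof -
  have P: "P = avg_shift_matrix n" using assms(2) unfolding avg_shift_matrix_def by simp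
  have "SIA n P" using avg_shift_matrix_SIA assms(1) P by simp
  moreover have "SIA_index n P = n - 1" using SIA_index_avg_shift_matrix assms(1) P by simp
  ultimately show ?thesis unfolding V_def by blast
qed

end
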